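(* Let $\rho>0$ and $f\in L_2(\mu)$. Then $[\mathcal{O},\iota\Lambda_\rho]f=0$ if and only if $[\mathcal{O},T_k](T_k+\rho\,\mathrm{id})^{-1}f=0$. Consequently the following are equivalent: (a) there exists $\rho>0$ with $[\mathcal{O},\iota\Lambda_\rho]=0$; (b) for all $\rho>0$, $[\mathcal{O},\iota\Lambda_\rho]=0$; (c) $[\mathcal{O},T_k]=0$.
   Context: $\mathcal{G}$ is a compact, second countable, Hausdorff topological group with Haar probability measure $\lambda$, acting measurably on a nonempty Polish space $\mathcal{X}$; $\mu$ is a $\mathcal{G}$-invariant Borel probability measure on $\mathcal{X}$ with $\mathrm{supp}\,\mu=\mathcal{X}$. $k:\mathcal{X}\times\mathcal{X}\to\mathbb{R}$ is a measurable symmetric positive definite kernel with RKHS $\mathcal{H}$, $k(\cdot,x)$ continuous for all $x$, $\sup_xk(x,x)<\infty$. $\iota:\mathcal{H}\to L_2(\mu)$ is the inclusion; $S_k:L_2(\mu)\to\mathcal{H}$, $S_kf(x)=\int k(x,x')f(x')d\mu(x')$; $T_k=\iota\circ S_k:L_2(\mu)\to L_2(\mu)$. For $\rho>0$, $\Lambda_\rho:L_2(\mu)\to\mathcal{H}$ maps $h$ to the unique minimiser over $f\in\mathcal{H}$ of $\|\iota f-h\|_\mu^2+\rho\|f\|_\mathcal{H}^2$. $\mathcal{O}f(x)=\int_\mathcal{G}f(gx)d\lambda(g)$ on $L_2(\mu)$. $[A,B]=AB-BA$. *)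

theory Defs
  imports "HOL-Probability.Probability"
begin

text \<open>The compact group is a type 'g of class topological_group_add (written additively,
  NOT assumed commutative).\<close>

definition haar_prob :: "'g::topological_group_add measure \<Rightarrow> bool" where
  "haar_prob lam \<longleftrightarrow> sets lam = sets borel \<and> prob_space lam \<and>
     (\<forall>g A. A \<in> sets borel \<longrightarrow> emeasure lam ((\<lambda>h. g + h) -` A) = emeasure lam A)"

definition group_action :: "('g::group_add \<Rightarrow> 'x \<Rightarrow> 'x) \<Rightarrow> bool" where
  "group_action act \<longleftrightarrow> (\<forall>x. act 0 x = x) \<and> (\<forall>g h x. act (g + h) x = act g (act h x))"

definition invariant_measure :: "('g \<Rightarrow> 'x \<Rightarrow> 'x) \<Rightarrow> 'x::topological_space measure \<Rightarrow> bool" where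
  "invariant_measure act mu \<longleftrightarrow>
     (\<forall>g A. A \<in> sets borel \<longrightarrow> emeasure mu (act g -` A) = emeasure mu A)"

definition full_support :: "'x::topological_space measure \<Rightarrow> bool" where
  "full_support mu \<longleftrightarrow> (\<forall>U. open U \<longrightarrow> U \<noteq> {} \<longrightarrow> emeasure mu U > 0)"

definition pos_def_kernel :: "('x \<Rightarrow> 'x \<Rightarrow> real) \<Rightarrow> bool" where
  "pos_def_kernel k \<longleftrightarrow>
     (\<forall>n (c::nat \<Rightarrow> real) (xs::nat \<Rightarrow> 'x). (\<Sum>i<n. \<Sum>j<n. c i * c j * k (xs i) (xs j)) \<ge> 0)"

text \<open>The RKHS of k is represented by a real Hilbert space type 'h together with an
  injective map evH sending each element to the function on X it is; the kernel sections
  k(.,x) belong to H and the reproducing property holds.\<close>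
definition is_rkhs :: "('x \<Rightarrow> 'x \<Rightarrow> real) \<Rightarrow> ('h::{real_inner,complete_space} \<Rightarrow> 'x \<Rightarrow> real) \<Rightarrow> bool" where
  "is_rkhs k evH \<longleftrightarrow> inj evH \<and>
     (\<forall>x. \<exists>kx. evH kx = (\<lambda>y. k y x) \<and> (\<forall>f. evH f x = f \<bullet> kx))"

section \<open>L2 and the operators (functions modulo mu-a.e. equality)\<close>

definition in_L2 :: "'x measure \<Rightarrow> ('x \<Rightarrow> real) \<Rightarrow> bool" where
  "in_L2 mu f \<longleftrightarrow> f \<in> borel_measurable mu \<and> integrable mu (\<lambda>x. (f x)\<^sup>2)"

definition orbit_avg :: "'g measure \<Rightarrow> ('g \<Rightarrow> 'x \<Rightarrow> 'x) \<Rightarrow> ('x \<Rightarrow> real) \<Rightarrow> 'x \<Rightarrow> real" where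
  "orbit_avg lam act f x = (\<integral>g. f (act g x) \<partial>lam)"

definition T_op :: "'x measure \<Rightarrow> ('x \<Rightarrow> 'x \<Rightarrow> real) \<Rightarrow> ('x \<Rightarrow> real) \<Rightarrow> 'x \<Rightarrow> real" where
  "T_op mu k f x = (\<integral>x'. k x x' * f x' \<partial>mu)"

definition Lambda_op :: "'x measure \<Rightarrow> ('h::real_normed_vector \<Rightarrow> 'x \<Rightarrow> real) \<Rightarrow> real \<Rightarrow> ('x \<Rightarrow> real) \<Rightarrow> 'h" where
  "Lambda_op mu evH rho h = (THE f. \<forall>f'.
      (\<integral>x. (evH f x - h x)\<^sup>2 \<partial>mu) + rho * (norm f)\<^sup>2 \<le> (\<integral>x. (evH f' x - h x)\<^sup>2 \<partial>mu) + rho * (norm f')\<^sup>2)"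

text \<open>(T_k + rho id)^{-1} f: an L2 solution g of T_k g + rho g = f (unique up to a.e.).\<close>
definition resolvent :: "'x measure \<Rightarrow> ('x \<Rightarrow> 'x \<Rightarrow> real) \<Rightarrow> real \<Rightarrow> ('x \<Rightarrow> real) \<Rightarrow> 'x \<Rightarrow> real" where
  "resolvent mu k rho f = (SOME g. in_L2 mu g \<and> (AE x in mu. T_op mu k g x + rho * g x = f x))"

definition comm_O_Lambda :: "'g measure \<Rightarrow> ('g \<Rightarrow> 'x \<Rightarrow> 'x) \<Rightarrow> 'x measure \<Rightarrow> ('h::real_normed_vector \<Rightarrow> 'x \<Rightarrow> real)
     \<Rightarrow> real \<Rightarrow> ('x \<Rightarrow> real) \<Rightarrow> 'x \<Rightarrow> real" where
  "comm_O_Lambda lam act mu evH rho f x =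
     orbit_avg lam act (evH (Lambda_op mu evH rho f)) x - evH (Lambda_op mu evH rho (orbit_avg lam act f)) x"

definition comm_O_T :: "'g measure \<Rightarrow> ('g \<Rightarrow> 'x \<Rightarrow> 'x) \<Rightarrow> 'x measure \<Rightarrow> ('x \<Rightarrow> 'x \<Rightarrow> real)
     \<Rightarrow> ('x \<Rightarrow> real) \<Rightarrow> 'x \<Rightarrow> real" where
  "comm_O_T lam act mu k f x = orbit_avg lam act (T_op mu k f) x - T_op mu k (orbit_avg lam act f) x"

end

theory Submission
  imports Defs
begin

text \<open>
  The first-order condition of the regularised least-squares problem,
  \<open>\<rho> \<Lambda>\<^sub>\<rho> h = T\<^sub>k (h - \<iota> \<Lambda>\<^sub>\<rho> h)\<close>, says \<open>\<iota> \<Lambda>\<^sub>\<rho> = T\<^sub>k R\<close> for the resolvent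
  \<open>R = (T\<^sub>k + \<rho>)\<inverse>\<close>. With \<open>d = R O f - O R f\<close> one computes
  \<open>[O, \<iota> \<Lambda>\<^sub>\<rho>] f = \<rho> d\<close> and \<open>[O, T\<^sub>k] R f = (T\<^sub>k + \<rho>) d\<close>, using only that \<open>O\<close> is
  linear and respects equality almost everywhere (this is where the invariance of \<open>\<mu>\<close>
  enters). As \<open>T\<^sub>k\<close> is positive, \<open>T\<^sub>k + \<rho>\<close> is injective, so the two commutators
  vanish together; the equivalences follow because every \<open>f\<close> equals \<open>R ((T\<^sub>k + \<rho>) f)\<close>.

  Existence of \<open>\<Lambda>\<^sub>\<rho>\<close>, the Riesz representation that puts \<open>T\<^sub>k d\<close> into \<open>\<H>\<close>, and the
  continuity (hence measurability) of every element of \<open>\<H>\<close> all rest on one fact: a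
  coercive quadratic functional on a closed subspace of a Hilbert space has a unique
  minimiser, because the parallelogram law makes minimising sequences Cauchy.
\<close>

section \<open>Minimisers of coercive quadratic functionals\<close>

lemma linear_coeff_zero_if_quadratic_nonneg:
  fixes a b :: real
  assumes "b \<ge> 0" and "\<And>t. a * t + b * t\<^sup>2 \<ge> 0"
  shows "a = 0"
proof (rule ccontr)
  assume "a \<noteq> 0"
  define t where "t = - a / (b + 1)"
  have a: "a = - t * (b + 1)" using \<open>b \<ge> 0\<close> unfolding t_def by simp
  then have "a * t + b * t\<^sup>2 = - t\<^sup>2" by (subst a) (simp add: algebra_simps power2_eq_square)
  moreover have "t \<noteq> 0" using \<open>a \<noteq> 0\<close> a by auto
  ultimately show False using assms(2)[of t] by simp
qed

locale coercive_quadratic =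
  fixes J :: "'h::{real_inner,complete_space} \<Rightarrow> real" and S :: "'h set"
    and L :: "'h \<Rightarrow> 'h \<Rightarrow> real" and Q :: "'h \<Rightarrow> real" and c B m :: real
  assumes closed_S: "closed S" and subspace_S: "subspace S"
    and expand: "\<And>w d t. w \<in> S \<Longrightarrow> d \<in> S \<Longrightarrow> J (w + t *\<^sub>R d) = J w + 2 * t * L w d + t\<^sup>2 * Q d"
    and coercive: "\<And>d. d \<in> S \<Longrightarrow> c * (norm d)\<^sup>2 \<le> Q d" and c_pos: "c > 0"
    and L_bounded: "\<And>w. w \<in> S \<Longrightarrow> \<exists>A. \<forall>d\<in>S. \<bar>L w d\<bar> \<le> A * norm d"
    and Q_bounded: "\<And>d. d \<in> S \<Longrightarrow> Q d \<le> B * (norm d)\<^sup>2"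
    and bounded_below: "\<And>w. w \<in> S \<Longrightarrow> m \<le> J w"
begin

lemma Q_nonneg: "d \<in> S \<Longrightarrow> Q d \<ge> 0"
  using coercive[of d] c_pos by (smt (verit) mult_nonneg_nonneg zero_le_power2)

lemma midpoint_gap:
  assumes "a \<in> S" "b \<in> S"
  shows "c / 4 * (norm (b - a))\<^sup>2 \<le> (J a + J b) / 2 - J (a + (1/2) *\<^sub>R (b - a))"
proof -
  have d: "b - a \<in> S" using assms subspace_S by (simp add: subspace_diff)
  have "J (a + (1/2) *\<^sub>R (b - a)) = J a + L a (b - a) + Q (b - a) / 4"
    using expand[OF assms(1) d, of "1/2"] by (simp add: power2_eq_square)
  moreover have "J b = J a + 2 * L a (b - a) + Q (b - a)"
    using expand[OF assms(1) d, of 1] by simp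
  ultimately show ?thesis using coercive[OF d] by (simp add: field_simps)
qed

lemma minimiser_first_order:
  assumes u: "u \<in> S" and min: "\<And>v. v \<in> S \<Longrightarrow> J u \<le> J v" and d: "d \<in> S"
  shows "L u d = 0"
proof -
  have "2 * L u d = 0"
  proof (rule linear_coeff_zero_if_quadratic_nonneg)
    show "0 \<le> Q d" using Q_nonneg d .
    fix t
    have "u + t *\<^sub>R d \<in> S" using u d subspace_S by (simp add: subspace_add subspace_scale)
    then have "J u \<le> J (u + t *\<^sub>R d)" by (rule min)
    then show "0 \<le> 2 * L u d * t + Q d * t\<^sup>2" using expand[OF u d, of t] by (simp add: algebra_simps)
  qed
  then show ?thesis by simp
qed

lemma minimiser_unique:
  assumes u: "u \<in> S" "\<And>v. v \<in> S \<Longrightarrow> J u \<le> J v" and u': "u' \<in> S" "\<And>v. v \<in> S \<Longrightarrow> J u' \<le> J v"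
  shows "u = u'"
proof -
  have d: "u' - u \<in> S" using u u' subspace_S by (simp add: subspace_diff)
  have "J u' = J u + 2 * L u (u' - u) + Q (u' - u)"
    using expand[OF u(1) d, of 1] by simp
  then have "J u' = J u + Q (u' - u)" using minimiser_first_order[OF u d] by simp
  then have "c * (norm (u' - u))\<^sup>2 \<le> 0" using coercive[OF d] u'(2)[OF u(1)] by simp
  then show ?thesis using c_pos by (simp add: mult_le_0_iff)
qed

lemma continuous_along_S:
  assumes l: "l \<in> S" and s: "\<And>n. s n \<in> S" "s \<longlonglongrightarrow> l"
  shows "(\<lambda>n. J (s n)) \<longlonglongrightarrow> J l"
proof -
  obtain A where A: "\<And>d. d \<in> S \<Longrightarrow> \<bar>L l d\<bar> \<le> A * norm d" using L_bounded[OF l] by blast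
  have bound: "\<forall>n. norm (J (s n) - J l) \<le> 2 * A * norm (s n - l) + B * (norm (s n - l))\<^sup>2"
  proof
    fix n
    have d: "s n - l \<in> S" using s(1) l subspace_S by (simp add: subspace_diff)
    have "J (s n) = J l + 2 * L l (s n - l) + Q (s n - l)"
      using expand[OF l d, of 1] by simp
    then show "norm (J (s n) - J l) \<le> 2 * A * norm (s n - l) + B * (norm (s n - l))\<^sup>2"
      using A[OF d] Q_bounded[OF d] Q_nonneg[OF d] by simp
  qed
  have "(\<lambda>n. norm (s n - l)) \<longlonglongrightarrow> 0" using s(2) by (simp add: LIM_zero tendsto_norm_zero)
  then have "(\<lambda>n. 2 * A * norm (s n - l) + B * (norm (s n - l))\<^sup>2) \<longlonglongrightarrow> 2 * A * 0 + B * 0\<^sup>2"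
    by (intro tendsto_add tendsto_mult_left tendsto_power)
  then have "(\<lambda>n. 2 * A * norm (s n - l) + B * (norm (s n - l))\<^sup>2) \<longlonglongrightarrow> 0" by simp
  then have "(\<lambda>n. J (s n) - J l) \<longlonglongrightarrow> 0" by (rule Lim_null_comparison[OF always_eventually[OF bound]])
  then show ?thesis by (simp add: LIM_zero_cancel)
qed

lemma minimising_sequence_Cauchy:
  assumes s: "\<And>n. s n \<in> S" "(\<lambda>n. J (s n)) \<longlonglongrightarrow> m'" and low: "\<And>v. v \<in> S \<Longrightarrow> m' \<le> J v"
  shows "Cauchy s"
proof (rule metric_CauchyI)
  fix e :: real assume "e > 0"
  define \<delta> where "\<delta> = c / 4 * e\<^sup>2"
  have "\<delta> > 0" using \<open>e > 0\<close> c_pos unfolding \<delta>_def by simp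
  then obtain N where N: "\<And>n. n \<ge> N \<Longrightarrow> J (s n) < m' + \<delta>"
    using order_tendstoD(2)[OF s(2), of "m' + \<delta>"] by (auto simp: eventually_sequentially)
  have "dist (s n) (s p) < e" if "n \<ge> N" "p \<ge> N" for n p
  proof -
    have "s p + (1/2) *\<^sub>R (s n - s p) \<in> S" using s(1) subspace_S
      by (simp add: subspace_add subspace_scale subspace_diff)
    then have "m' \<le> J (s p + (1/2) *\<^sub>R (s n - s p))" by (rule low)
    moreover note midpoint_gap[OF s(1)[of p] s(1)[of n]] N[OF that(1)] N[OF that(2)]
    ultimately have "c / 4 * (norm (s n - s p))\<^sup>2 < \<delta>" by argo
    then have "(norm (s n - s p))\<^sup>2 < e\<^sup>2" using c_pos unfolding \<delta>_def by simp
    then show ?thesis using \<open>e > 0\<close> by (simp add: dist_norm power_less_imp_less_base)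
  qed
  then show "\<exists>N. \<forall>n\<ge>N. \<forall>p\<ge>N. dist (s n) (s p) < e" by blast
qed

lemma minimiser_exists: "\<exists>u\<in>S. \<forall>v\<in>S. J u \<le> J v"
proof -
  define m' where "m' = Inf (J ` S)"
  have ne: "J ` S \<noteq> {}" using subspace_S subspace_0 by blast
  have bdd: "bdd_below (J ` S)" using bounded_below by (rule bdd_belowI2)
  have low: "\<And>v. v \<in> S \<Longrightarrow> m' \<le> J v" unfolding m'_def using bdd by (simp add: cInf_lower)
  have "m' \<in> closure (J ` S)" unfolding m'_def by (rule closure_contains_Inf[OF ne bdd])
  then obtain y where y: "\<And>n. y n \<in> J ` S" "y \<longlonglongrightarrow> m'" by (auto simp: closure_sequential)
  define s where "s n = inv_into S J (y n)" for n
  have s: "\<And>n. s n \<in> S" "(\<lambda>n. J (s n)) \<longlonglongrightarrow> m'"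
    using y by (simp_all add: s_def inv_into_into f_inv_into_f)
  have "convergent s" using minimising_sequence_Cauchy[OF s low] by (simp add: Cauchy_convergent_iff)
  then obtain l where l: "s \<longlonglongrightarrow> l" unfolding convergent_def by blast
  have "l \<in> S" using closed_S l s(1) closed_sequential_limits by blast
  have "J l = m'" using LIMSEQ_unique[OF continuous_along_S[OF \<open>l \<in> S\<close> s(1) l] s(2)] .
  then show ?thesis using \<open>l \<in> S\<close> low by auto
qed

end

section \<open>Orthogonal projection and Riesz representation\<close>

lemma norm_add_scaleR_square:
  fixes w d :: "'a::real_inner"
  shows "(norm (w + t *\<^sub>R d))\<^sup>2 = (norm w)\<^sup>2 + 2 * t * (w \<bullet> d) + t\<^sup>2 * (norm d)\<^sup>2"
  unfolding power2_norm_eq_inner by (simp add: inner_add inner_commute algebra_simps power2_eq_square)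

lemma orthogonal_projection_exists:
  fixes S :: "'a::{real_inner,complete_space} set"
  assumes "closed S" "subspace S"
  obtains p where "p \<in> S" "\<And>v. v \<in> S \<Longrightarrow> (u - p) \<bullet> v = 0"
proof -
  interpret coercive_quadratic "\<lambda>v. (norm (u - v))\<^sup>2" S "\<lambda>w d. - ((u - w) \<bullet> d)" "\<lambda>d. (norm d)\<^sup>2" 1 1 0
  proof
    fix w d and t :: real
    have "(norm (u - (w + t *\<^sub>R d)))\<^sup>2 = (norm ((u - w) + (- t) *\<^sub>R d))\<^sup>2"
      by (simp add: algebra_simps)
    then show "(norm (u - (w + t *\<^sub>R d)))\<^sup>2 = (norm (u - w))\<^sup>2 + 2 * t * - ((u - w) \<bullet> d) + t\<^sup>2 * (norm d)\<^sup>2"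
      by (simp only: norm_add_scaleR_square) simp
  next
    fix w
    show "\<exists>A. \<forall>d\<in>S. \<bar>- ((u - w) \<bullet> d)\<bar> \<le> A * norm d"
      by (rule exI[of _ "norm (u - w)"]) (simp add: Cauchy_Schwarz_ineq2)
  qed (use assms in auto)
  obtain p where p: "p \<in> S" "\<And>v. v \<in> S \<Longrightarrow> (norm (u - p))\<^sup>2 \<le> (norm (u - v))\<^sup>2"
    using minimiser_exists by blast
  show thesis using minimiser_first_order[OF p] by (intro that[OF p(1)]) simp
qed

lemma riesz_representation:
  fixes phi :: "'a::{real_inner,complete_space} \<Rightarrow> real"
  assumes "bounded_linear phi"
  obtains w where "\<And>v. phi v = w \<bullet> v"
proof -
  interpret phi: bounded_linear phi by fact
  obtain K where K: "\<And>v. \<bar>phi v\<bar> \<le> norm v * K" using phi.bounded by auto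
  interpret coercive_quadratic "\<lambda>w. (norm w)\<^sup>2 - 2 * phi w" UNIV "\<lambda>w v. w \<bullet> v - phi v"
    "\<lambda>v. (norm v)\<^sup>2" 1 1 "- K\<^sup>2"
  proof
    fix w d and t :: real
    show "(norm (w + t *\<^sub>R d))\<^sup>2 - 2 * phi (w + t *\<^sub>R d)
        = (norm w)\<^sup>2 - 2 * phi w + 2 * t * (w \<bullet> d - phi d) + t\<^sup>2 * (norm d)\<^sup>2"
      by (simp add: norm_add_scaleR_square phi.add phi.scale algebra_simps)
  next
    fix w
    show "\<exists>A. \<forall>d\<in>UNIV. \<bar>w \<bullet> d - phi d\<bar> \<le> A * norm d"
    proof (intro exI ballI)
      fix d
      show "\<bar>w \<bullet> d - phi d\<bar> \<le> (norm w + K) * norm d"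
        using Cauchy_Schwarz_ineq2[of w d] K[of d] by (simp add: algebra_simps)
    qed
    have "- K\<^sup>2 \<le> (norm w - K)\<^sup>2 - K\<^sup>2" by simp
    also have "\<dots> \<le> (norm w)\<^sup>2 - 2 * phi w"
      using K[of w] by (simp add: power2_eq_square algebra_simps)
    finally show "- K\<^sup>2 \<le> (norm w)\<^sup>2 - 2 * phi w" .
  qed auto
  obtain w where w: "\<And>v. (norm w)\<^sup>2 - 2 * phi w \<le> (norm v)\<^sup>2 - 2 * phi v"
    using minimiser_exists by blast
  show thesis using minimiser_first_order[OF UNIV_I w UNIV_I] by (intro that[of w]) simp
qed

section \<open>Reproducing kernel Hilbert spaces\<close>

locale rkhs =
  fixes k :: "'x::topological_space \<Rightarrow> 'x \<Rightarrow> real"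
    and evH :: "'h::{real_inner,complete_space} \<Rightarrow> 'x \<Rightarrow> real"
  assumes is_rkhs: "is_rkhs k evH"
    and kernel_continuous: "\<And>x. continuous_on UNIV (\<lambda>y. k y x)"
    and diagonal_bounded: "bdd_above (range (\<lambda>x. k x x))"
begin

definition kernel_section :: "'x \<Rightarrow> 'h" where
  "kernel_section x = (SOME v. evH v = (\<lambda>y. k y x) \<and> (\<forall>f. evH f x = f \<bullet> v))"

lemma kernel_section: "evH (kernel_section x) = (\<lambda>y. k y x)"
  and eval_eq_inner: "evH f x = f \<bullet> kernel_section x"
proof -
  have "\<exists>v. evH v = (\<lambda>y. k y x) \<and> (\<forall>f. evH f x = f \<bullet> v)"
    using is_rkhs unfolding is_rkhs_def by blast
  then have "evH (kernel_section x) = (\<lambda>y. k y x) \<and> (\<forall>f. evH f x = f \<bullet> kernel_section x)"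
    unfolding kernel_section_def by (rule someI_ex)
  then show "evH (kernel_section x) = (\<lambda>y. k y x)" "evH f x = f \<bullet> kernel_section x" by blast+
qed

lemma eval_inject: "evH a = evH b \<Longrightarrow> a = b"
  using is_rkhs unfolding is_rkhs_def inj_def by blast

lemma eval_add: "evH (a + b) x = evH a x + evH b x"
  and eval_diff: "evH (a - b) x = evH a x - evH b x"
  and eval_scaleR: "evH (t *\<^sub>R a) x = t * evH a x"
  by (simp_all add: eval_eq_inner inner_add_left inner_diff_left)

lemma kernel_eq_inner: "k y x = kernel_section x \<bullet> kernel_section y"
  using eval_eq_inner[of "kernel_section x" y] by (simp add: kernel_section)

lemma kernel_sym: "k x y = k y x"
  by (simp add: kernel_eq_inner inner_commute)

definition diag_sup :: real where "diag_sup = (SUP x. k x x)"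

lemma kernel_diag_le: "k x x \<le> diag_sup"
  unfolding diag_sup_def using diagonal_bounded by (simp add: cSup_upper)

lemma diag_sup_nonneg: "diag_sup \<ge> 0"
proof -
  have "0 \<le> k x x" for x by (simp add: kernel_eq_inner)
  from this[of undefined] kernel_diag_le[of undefined] show ?thesis by linarith
qed

lemma norm_kernel_section_le: "norm (kernel_section x) \<le> sqrt diag_sup"
  unfolding norm_eq_sqrt_inner kernel_eq_inner[symmetric] by (rule real_sqrt_le_mono[OF kernel_diag_le])

lemma abs_eval_le: "\<bar>evH f x\<bar> \<le> norm f * sqrt diag_sup"
proof -
  have "\<bar>evH f x\<bar> \<le> norm f * norm (kernel_section x)"
    by (subst eval_eq_inner) (rule Cauchy_Schwarz_ineq2)
  also have "\<dots> \<le> norm f * sqrt diag_sup" by (rule mult_left_mono[OF norm_kernel_section_le norm_ge_zero])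
  finally show ?thesis .
qed

lemma subspace_continuous_elements: "subspace {u. continuous_on UNIV (evH u)}"
proof (rule subspaceI)
  have "evH 0 = (\<lambda>x. 0)" by (simp add: fun_eq_iff eval_eq_inner)
  then show "0 \<in> {u. continuous_on UNIV (evH u)}" by simp
next
  fix a b assume "a \<in> {u. continuous_on UNIV (evH u)}" "b \<in> {u. continuous_on UNIV (evH u)}"
  then have "continuous_on UNIV (\<lambda>x. evH a x + evH b x)" by (intro continuous_on_add) simp_all
  then show "a + b \<in> {u. continuous_on UNIV (evH u)}" by (simp add: eval_add[abs_def])
next
  fix t a assume "a \<in> {u. continuous_on UNIV (evH u)}"
  then have "continuous_on UNIV (\<lambda>x. t * evH a x)" by (intro continuous_on_mult_left) simp
  then show "t *\<^sub>R a \<in> {u. continuous_on UNIV (evH u)}" by (simp add: eval_scaleR[abs_def])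
qed

lemma closed_continuous_elements: "closed {u. continuous_on UNIV (evH u)}"
  unfolding closed_sequential_limits
proof (intro allI impI, elim conjE)
  fix s l assume s: "\<forall>n. s n \<in> {u. continuous_on UNIV (evH u)}" and l: "s \<longlonglongrightarrow> l"
  have C: "sqrt diag_sup + 1 > 0" using diag_sup_nonneg by (smt (verit) real_sqrt_ge_zero)
  have "uniform_limit UNIV (\<lambda>n. evH (s n)) (evH l) sequentially"
  proof (rule uniform_limitI)
    fix e :: real assume "e > 0"
    with C have "\<forall>\<^sub>F n in sequentially. dist (s n) l < e / (sqrt diag_sup + 1)"
      by (intro tendstoD[OF l]) simp
    then show "\<forall>\<^sub>F n in sequentially. \<forall>x\<in>UNIV. dist (evH (s n) x) (evH l x) < e"
    proof (rule eventually_mono, intro ballI)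
      fix n x assume d: "dist (s n) l < e / (sqrt diag_sup + 1)"
      have "dist (evH (s n) x) (evH l x) = \<bar>evH (s n - l) x\<bar>" by (simp add: eval_diff dist_real_def)
      also have "\<dots> \<le> norm (s n - l) * sqrt diag_sup" by (rule abs_eval_le)
      also have "\<dots> \<le> norm (s n - l) * (sqrt diag_sup + 1)" by (rule mult_left_mono) simp_all
      also have "\<dots> < e" using d C by (simp add: dist_norm pos_less_divide_eq)
      finally show "dist (evH (s n) x) (evH l x) < e" .
    qed
  qed
  moreover have "\<forall>\<^sub>F n in sequentially. continuous_on UNIV (evH (s n))" using s by simp
  ultimately have "continuous_on UNIV (evH l)" by (intro uniform_limit_theorem) auto
  then show "l \<in> {u. continuous_on UNIV (evH u)}" by simp
qed

text \<open>The continuous elements form a closed subspace containing every kernel section, and an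
  element orthogonal to all kernel sections vanishes everywhere.\<close>

lemma continuous_eval: "continuous_on UNIV (evH u)"
proof -
  obtain p where p: "p \<in> {u. continuous_on UNIV (evH u)}"
    and orth: "\<And>v. v \<in> {u. continuous_on UNIV (evH u)} \<Longrightarrow> (u - p) \<bullet> v = 0"
    by (rule orthogonal_projection_exists[where u = u,
          OF closed_continuous_elements subspace_continuous_elements]) (rule that)
  have "(u - p) \<bullet> kernel_section x = 0" for x
    by (rule orth) (simp add: kernel_section kernel_continuous)
  then have "evH (u - p) = evH 0" by (simp add: fun_eq_iff eval_eq_inner)
  then have "u - p = 0" by (rule eval_inject)
  with p show ?thesis by simp
qed

end

section \<open>Square-integrable functions\<close>

context prob_space
begin

lemma in_L2_integrable: "in_L2 M f \<Longrightarrow> integrable M f"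
  unfolding in_L2_def by (auto intro: square_integrable_imp_integrable)

lemma in_L2_integrable_mult:
  assumes "in_L2 M f" "in_L2 M g"
  shows "integrable M (\<lambda>x. f x * g x)"
proof (rule Bochner_Integration.integrable_bound)
  show "integrable M (\<lambda>x. (f x)\<^sup>2 + (g x)\<^sup>2)" using assms unfolding in_L2_def by simp
  show "(\<lambda>x. f x * g x) \<in> borel_measurable M"
    using assms unfolding in_L2_def by (auto intro!: borel_measurable_times)
  have "\<bar>f x * g x\<bar> \<le> (f x)\<^sup>2 + (g x)\<^sup>2" for x
    using sum_squares_bound[of "\<bar>f x\<bar>" "\<bar>g x\<bar>"] zero_le_mult_iff[of "\<bar>f x\<bar>" "\<bar>g x\<bar>"]
    unfolding abs_mult power2_abs by linarith
  then show "AE x in M. norm (f x * g x) \<le> norm ((f x)\<^sup>2 + (g x)\<^sup>2)" by simp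
qed

lemma in_L2_add_scale:
  assumes "in_L2 M f" "in_L2 M g"
  shows "in_L2 M (\<lambda>x. f x + c * g x)"
proof -
  have "(\<lambda>x. (f x + c * g x)\<^sup>2) = (\<lambda>x. (f x)\<^sup>2 + (2 * c * (f x * g x) + c\<^sup>2 * (g x)\<^sup>2))"
    by (simp add: fun_eq_iff power2_eq_square algebra_simps)
  then show ?thesis
    using assms in_L2_integrable_mult[OF assms] unfolding in_L2_def
    by (auto intro!: borel_measurable_add borel_measurable_times)
qed

lemma in_L2_scale: "in_L2 M f \<Longrightarrow> in_L2 M (\<lambda>x. c * f x)"
  using in_L2_add_scale[of "\<lambda>x. 0" f c] by (simp add: in_L2_def)

lemma in_L2_diff: "in_L2 M f \<Longrightarrow> in_L2 M g \<Longrightarrow> in_L2 M (\<lambda>x. f x - g x)"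
  using in_L2_add_scale[of f g "-1"] by simp

lemma in_L2_bounded:
  assumes "f \<in> borel_measurable M" "\<And>x. \<bar>f x\<bar> \<le> B"
  shows "in_L2 M f"
  unfolding in_L2_def
proof (intro conjI integrable_const_bound[where B = "B\<^sup>2"])
  have "\<bar>f x\<bar>\<^sup>2 \<le> B\<^sup>2" for x by (rule power_mono[OF assms(2) abs_ge_zero])
  then show "AE x in M. norm ((f x)\<^sup>2) \<le> B\<^sup>2" by simp
qed (use assms in simp_all)

lemma square_integral_le:
  fixes f :: "'a \<Rightarrow> real"
  assumes "integrable M f" "integrable M (\<lambda>x. (f x)\<^sup>2)"
  shows "(\<integral>x. f x \<partial>M)\<^sup>2 \<le> (\<integral>x. (f x)\<^sup>2 \<partial>M)"
  using variance_positive[of f] variance_eq[OF assms] by simp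

end

section \<open>The integral operator, Tikhonov regularisation and the resolvent\<close>

locale rkhs_prob_space = rkhs k evH + prob_space mu
  for k :: "'x::topological_space \<Rightarrow> 'x \<Rightarrow> real"
    and evH :: "'h::{real_inner,complete_space} \<Rightarrow> 'x \<Rightarrow> real" and mu :: "'x measure" +
  assumes sets_mu: "sets mu = sets borel"
begin

lemma eval_measurable: "evH u \<in> borel_measurable mu"
  using borel_measurable_continuous_onI[OF continuous_eval] measurable_cong_sets[OF sets_mu refl]
  by blast

lemma eval_in_L2: "in_L2 mu (evH u)"
  by (rule in_L2_bounded[OF eval_measurable abs_eval_le])

lemma kernel_in_L2: "in_L2 mu (k x)"
proof -
  have "k x = evH (kernel_section x)" by (simp add: fun_eq_iff kernel_section kernel_sym)
  then show ?thesis using eval_in_L2 by simp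
qed

lemma T_op_add_scale:
  assumes "in_L2 mu a" "in_L2 mu b"
  shows "T_op mu k (\<lambda>y. a y + c * b y) x = T_op mu k a x + c * T_op mu k b x"
proof -
  have "(\<lambda>y. k x y * (a y + c * b y)) = (\<lambda>y. k x y * a y + c * (k x y * b y))"
    by (simp add: fun_eq_iff algebra_simps)
  then show ?thesis
    unfolding T_op_def using in_L2_integrable_mult[OF kernel_in_L2 assms(1)]
      in_L2_integrable_mult[OF kernel_in_L2 assms(2)] by simp
qed

lemma T_op_diff:
  assumes "in_L2 mu a" "in_L2 mu b"
  shows "T_op mu k (\<lambda>y. a y - b y) x = T_op mu k a x - T_op mu k b x"
  using T_op_add_scale[OF assms, of "-1"] by simp

lemma T_op_cong_AE:
  assumes "a \<in> borel_measurable mu" "b \<in> borel_measurable mu" "AE y in mu. a y = b y"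
  shows "T_op mu k a x = T_op mu k b x"
  unfolding T_op_def
proof (rule integral_cong_AE)
  have "k x \<in> borel_measurable mu" using kernel_in_L2 unfolding in_L2_def by blast
  then show "(\<lambda>y. k x y * a y) \<in> borel_measurable mu" "(\<lambda>y. k x y * b y) \<in> borel_measurable mu"
    using assms(1,2) by simp_all
  show "AE y in mu. k x y * a y = k x y * b y" using assms(3) by eventually_elim simp
qed

lemma abs_integral_mult_eval_le:
  assumes "in_L2 mu g"
  shows "\<bar>\<integral>y. g y * evH v y \<partial>mu\<bar> \<le> norm v * (sqrt diag_sup * (\<integral>y. \<bar>g y\<bar> \<partial>mu))"
proof -
  have "\<bar>\<integral>y. g y * evH v y \<partial>mu\<bar> \<le> (\<integral>y. \<bar>g y\<bar> * (norm v * sqrt diag_sup) \<partial>mu)"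
  proof (rule order_trans[OF integral_abs_bound integral_mono])
    show "integrable mu (\<lambda>y. \<bar>g y * evH v y\<bar>)"
      using in_L2_integrable_mult[OF assms eval_in_L2] by simp
    show "integrable mu (\<lambda>y. \<bar>g y\<bar> * (norm v * sqrt diag_sup))"
      using in_L2_integrable[OF assms] by simp
    show "\<bar>g y * evH v y\<bar> \<le> \<bar>g y\<bar> * (norm v * sqrt diag_sup)" for y
      unfolding abs_mult by (rule mult_left_mono[OF abs_eval_le abs_ge_zero])
  qed
  then show ?thesis by (simp add: algebra_simps)
qed

lemma T_op_representer:
  assumes d: "in_L2 mu d"
  obtains w where "evH w = T_op mu k d" "w \<bullet> w = (\<integral>y. d y * T_op mu k d y \<partial>mu)"
proof -
  have int: "integrable mu (\<lambda>y. d y * evH v y)" for v by (rule in_L2_integrable_mult[OF d eval_in_L2])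
  have "bounded_linear (\<lambda>v. \<integral>y. d y * evH v y \<partial>mu)"
  proof (rule bounded_linear_intro)
    show "(\<integral>y. d y * evH (v + v') y \<partial>mu) = (\<integral>y. d y * evH v y \<partial>mu) + (\<integral>y. d y * evH v' y \<partial>mu)" for v v'
      using int[of v] int[of v'] by (simp add: eval_add distrib_left)
    show "(\<integral>y. d y * evH (t *\<^sub>R v) y \<partial>mu) = t *\<^sub>R (\<integral>y. d y * evH v y \<partial>mu)" for t v
      by (simp add: eval_scaleR algebra_simps)
    show "norm (\<integral>y. d y * evH v y \<partial>mu) \<le> norm v * (sqrt diag_sup * (\<integral>y. \<bar>d y\<bar> \<partial>mu))" for v
      using abs_integral_mult_eval_le[OF d] by simp
  qed
  then obtain w where w: "\<And>v. (\<integral>y. d y * evH v y \<partial>mu) = w \<bullet> v"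
    by (rule riesz_representation) (rule that)
  have "evH w x = T_op mu k d x" for x
    using w[of "kernel_section x"]
    by (simp add: T_op_def kernel_section eval_eq_inner[of w x] inner_commute kernel_sym mult.commute)
  then have "evH w = T_op mu k d" by blast
  with w[of w] show thesis by (intro that) simp_all
qed

lemma T_op_in_L2: "in_L2 mu d \<Longrightarrow> in_L2 mu (T_op mu k d)"
  by (metis T_op_representer eval_in_L2)

lemma T_op_nonneg: "in_L2 mu d \<Longrightarrow> 0 \<le> (\<integral>y. d y * T_op mu k d y \<partial>mu)"
  by (metis T_op_representer inner_ge_zero)

lemma T_op_plus_injective:
  assumes d: "in_L2 mu d" and rho: "rho > 0" and eq: "AE y in mu. T_op mu k d y + rho * d y = 0"
  shows "AE y in mu. d y = 0"
proof -
  have Td: "in_L2 mu (T_op mu k d)" by (rule T_op_in_L2[OF d])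
  have int1: "integrable mu (\<lambda>y. d y * T_op mu k d y)" by (rule in_L2_integrable_mult[OF d Td])
  have int2: "integrable mu (\<lambda>y. (d y)\<^sup>2)" using d unfolding in_L2_def by blast
  have "(\<integral>y. d y * T_op mu k d y \<partial>mu) + rho * (\<integral>y. (d y)\<^sup>2 \<partial>mu)
      = (\<integral>y. d y * (T_op mu k d y + rho * d y) \<partial>mu)"
    using int1 int2 by (simp add: distrib_left power2_eq_square mult.left_commute)
  also have "\<dots> = (\<integral>y. 0 \<partial>mu)"
    by (rule integral_cong_AE) (use eq d Td in \<open>auto simp: in_L2_def\<close>)
  also have "\<dots> = 0" by simp
  finally have "rho * (\<integral>y. (d y)\<^sup>2 \<partial>mu) \<le> 0" using T_op_nonneg[OF d] by linarith
  then have "(\<integral>y. (d y)\<^sup>2 \<partial>mu) \<le> 0" using rho by (simp add: mult_le_0_iff)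
  moreover have "0 \<le> (\<integral>y. (d y)\<^sup>2 \<partial>mu)" by simp
  ultimately have "(\<integral>y. (d y)\<^sup>2 \<partial>mu) = 0" by linarith
  then have "AE y in mu. (d y)\<^sup>2 = 0" using integral_nonneg_eq_0_iff_AE[OF int2] by simp
  then show ?thesis by simp
qed

definition regularised_risk :: "real \<Rightarrow> ('x \<Rightarrow> real) \<Rightarrow> 'h \<Rightarrow> real" where
  "regularised_risk rho h v = (\<integral>x. (evH v x - h x)\<^sup>2 \<partial>mu) + rho * (norm v)\<^sup>2"

lemma integral_eval_square_le: "(\<integral>x. (evH d x)\<^sup>2 \<partial>mu) \<le> diag_sup * (norm d)\<^sup>2"
proof -
  have "(\<integral>x. (evH d x)\<^sup>2 \<partial>mu) \<le> (\<integral>x. (norm d * sqrt diag_sup)\<^sup>2 \<partial>mu)"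
  proof (rule integral_mono)
    show "integrable mu (\<lambda>x. (evH d x)\<^sup>2)" using eval_in_L2 unfolding in_L2_def by blast
    show "(evH d x)\<^sup>2 \<le> (norm d * sqrt diag_sup)\<^sup>2" for x
      using power_mono[OF abs_eval_le abs_ge_zero, of d x 2] by simp
  qed simp
  also have "\<dots> = diag_sup * (norm d)\<^sup>2" using diag_sup_nonneg by (simp add: prob_space power_mult_distrib)
  finally show ?thesis .
qed

lemma coercive_quadratic_regularised_risk:
  assumes rho: "rho > 0" and h: "in_L2 mu h"
  shows "coercive_quadratic (regularised_risk rho h) UNIV
    (\<lambda>w d. (\<integral>x. (evH w x - h x) * evH d x \<partial>mu) + rho * (w \<bullet> d))
    (\<lambda>d. (\<integral>x. (evH d x)\<^sup>2 \<partial>mu) + rho * (norm d)\<^sup>2) rho (diag_sup + rho) 0"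
proof
  fix w d :: 'h and t :: real
  have res: "in_L2 mu (\<lambda>x. evH w x - h x)" by (rule in_L2_diff[OF eval_in_L2 h])
  have "(\<lambda>x. (evH (w + t *\<^sub>R d) x - h x)\<^sup>2) =
        (\<lambda>x. (evH w x - h x)\<^sup>2 + (2 * t * ((evH w x - h x) * evH d x) + t\<^sup>2 * (evH d x)\<^sup>2))"
    by (simp add: fun_eq_iff eval_add eval_scaleR power2_eq_square algebra_simps)
  then have "(\<integral>x. (evH (w + t *\<^sub>R d) x - h x)\<^sup>2 \<partial>mu) = (\<integral>x. (evH w x - h x)\<^sup>2 \<partial>mu)
      + 2 * t * (\<integral>x. (evH w x - h x) * evH d x \<partial>mu) + t\<^sup>2 * (\<integral>x. (evH d x)\<^sup>2 \<partial>mu)"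
    using res eval_in_L2[of d] in_L2_integrable_mult[OF res eval_in_L2] by (simp add: in_L2_def)
  then show "regularised_risk rho h (w + t *\<^sub>R d) = regularised_risk rho h w
      + 2 * t * ((\<integral>x. (evH w x - h x) * evH d x \<partial>mu) + rho * (w \<bullet> d))
      + t\<^sup>2 * ((\<integral>x. (evH d x)\<^sup>2 \<partial>mu) + rho * (norm d)\<^sup>2)"
    unfolding regularised_risk_def norm_add_scaleR_square by (simp add: algebra_simps)
next
  fix w d :: 'h
  show "\<exists>A. \<forall>d\<in>UNIV. \<bar>(\<integral>x. (evH w x - h x) * evH d x \<partial>mu) + rho * (w \<bullet> d)\<bar> \<le> A * norm d"
  proof (intro exI ballI)
    fix d :: 'h
    have "\<bar>(\<integral>x. (evH w x - h x) * evH d x \<partial>mu) + rho * (w \<bullet> d)\<bar>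
        \<le> \<bar>\<integral>x. (evH w x - h x) * evH d x \<partial>mu\<bar> + \<bar>rho * (w \<bullet> d)\<bar>" by (rule abs_triangle_ineq)
    also have "\<dots> \<le> norm d * (sqrt diag_sup * (\<integral>x. \<bar>evH w x - h x\<bar> \<partial>mu)) + rho * (norm w * norm d)"
    proof (rule add_mono)
      show "\<bar>rho * (w \<bullet> d)\<bar> \<le> rho * (norm w * norm d)"
        using Cauchy_Schwarz_ineq2[of w d] rho by (simp add: abs_mult)
    qed (rule abs_integral_mult_eval_le[OF in_L2_diff[OF eval_in_L2 h]])
    finally show "\<bar>(\<integral>x. (evH w x - h x) * evH d x \<partial>mu) + rho * (w \<bullet> d)\<bar>
        \<le> (sqrt diag_sup * (\<integral>x. \<bar>evH w x - h x\<bar> \<partial>mu) + rho * norm w) * norm d"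
      by (simp add: algebra_simps)
  qed
  show "(\<integral>x. (evH d x)\<^sup>2 \<partial>mu) + rho * (norm d)\<^sup>2 \<le> (diag_sup + rho) * (norm d)\<^sup>2"
    using integral_eval_square_le[of d] by (simp add: algebra_simps)
  show "rho * (norm d)\<^sup>2 \<le> (\<integral>x. (evH d x)\<^sup>2 \<partial>mu) + rho * (norm d)\<^sup>2" by simp
  show "0 \<le> regularised_risk rho h w" unfolding regularised_risk_def using rho by simp
qed (use rho in auto)

lemma Lambda_op_minimises:
  assumes rho: "rho > 0" and h: "in_L2 mu h"
  shows "regularised_risk rho h (Lambda_op mu evH rho h) \<le> regularised_risk rho h v"
proof -
  interpret coercive_quadratic "regularised_risk rho h" UNIV
    "\<lambda>w d. (\<integral>x. (evH w x - h x) * evH d x \<partial>mu) + rho * (w \<bullet> d)"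
    "\<lambda>d. (\<integral>x. (evH d x)\<^sup>2 \<partial>mu) + rho * (norm d)\<^sup>2" rho "diag_sup + rho" 0
    by (rule coercive_quadratic_regularised_risk[OF rho h])
  obtain u where u: "\<And>v. regularised_risk rho h u \<le> regularised_risk rho h v"
    using minimiser_exists by blast
  have "Lambda_op mu evH rho h = (THE f. \<forall>f'. regularised_risk rho h f \<le> regularised_risk rho h f')"
    unfolding Lambda_op_def regularised_risk_def ..
  also have "\<dots> = u"
    using u minimiser_unique[OF UNIV_I _ UNIV_I u] by (intro the_equality) auto
  finally show ?thesis using u by simp
qed

lemma Lambda_op_normal_equation:
  assumes rho: "rho > 0" and h: "in_L2 mu h"
  shows "rho * evH (Lambda_op mu evH rho h) x = T_op mu k (\<lambda>y. h y - evH (Lambda_op mu evH rho h) y) x"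
proof -
  interpret coercive_quadratic "regularised_risk rho h" UNIV
    "\<lambda>w d. (\<integral>x. (evH w x - h x) * evH d x \<partial>mu) + rho * (w \<bullet> d)"
    "\<lambda>d. (\<integral>x. (evH d x)\<^sup>2 \<partial>mu) + rho * (norm d)\<^sup>2" rho "diag_sup + rho" 0
    by (rule coercive_quadratic_regularised_risk[OF rho h])
  define u where "u = Lambda_op mu evH rho h"
  have "(\<integral>y. (evH u y - h y) * evH (kernel_section x) y \<partial>mu) + rho * (u \<bullet> kernel_section x) = 0"
    using minimiser_first_order[OF UNIV_I _ UNIV_I] Lambda_op_minimises[OF rho h] unfolding u_def by blast
  moreover have "(\<lambda>y. (evH u y - h y) * evH (kernel_section x) y) = (\<lambda>y. - (k x y * (h y - evH u y)))"
    by (simp add: fun_eq_iff kernel_section kernel_sym algebra_simps)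
  ultimately show ?thesis
    unfolding u_def[symmetric] T_op_def by (simp add: eval_eq_inner[of u x])
qed

lemma T_op_Lambda_residual:
  assumes rho: "rho > 0" and h: "in_L2 mu h"
  shows "T_op mu k (\<lambda>y. (h y - evH (Lambda_op mu evH rho h) y) / rho) = evH (Lambda_op mu evH rho h)"
proof
  fix x
  have "T_op mu k (\<lambda>y. (h y - evH (Lambda_op mu evH rho h) y) / rho) x
      = T_op mu k (\<lambda>y. h y - evH (Lambda_op mu evH rho h) y) x / rho"
    unfolding T_op_def by simp
  also have "\<dots> = evH (Lambda_op mu evH rho h) x"
    using Lambda_op_normal_equation[OF rho h, of x, symmetric] rho by simp
  finally show "T_op mu k (\<lambda>y. (h y - evH (Lambda_op mu evH rho h) y) / rho) x = evH (Lambda_op mu evH rho h) x" .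
qed

lemma resolvent_eq_AE:
  assumes rho: "rho > 0" and f: "in_L2 mu f" and g: "in_L2 mu g"
    and eq: "AE y in mu. T_op mu k g y + rho * g y = f y"
  shows "in_L2 mu (resolvent mu k rho f)" and "AE y in mu. resolvent mu k rho f y = g y"
proof -
  define R where "R = resolvent mu k rho f"
  have "in_L2 mu R \<and> (AE y in mu. T_op mu k R y + rho * R y = f y)"
    unfolding R_def resolvent_def using g eq by (rule someI[where x = g, OF conjI])
  then have R: "in_L2 mu R" and eqR: "AE y in mu. T_op mu k R y + rho * R y = f y" by blast+
  from R show "in_L2 mu (resolvent mu k rho f)" unfolding R_def .
  have "AE y in mu. T_op mu k (\<lambda>y. R y - g y) y + rho * (R y - g y) = 0"
    using eq eqR by eventually_elim (simp add: T_op_diff[OF R g] algebra_simps)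
  then have "AE y in mu. R y - g y = 0"
    by (rule T_op_plus_injective[OF in_L2_diff[OF R g] rho])
  then show "AE y in mu. resolvent mu k rho f y = g y" unfolding R_def by eventually_elim simp
qed

lemma resolvent_Lambda_op:
  assumes rho: "rho > 0" and f: "in_L2 mu f"
  shows "in_L2 mu (resolvent mu k rho f)"
    and "AE y in mu. T_op mu k (resolvent mu k rho f) y + rho * resolvent mu k rho f y = f y"
    and "T_op mu k (resolvent mu k rho f) = evH (Lambda_op mu evH rho f)"
proof -
  define g where "g y = (f y - evH (Lambda_op mu evH rho f) y) / rho" for y
  have g: "in_L2 mu g"
    unfolding g_def divide_inverse mult.commute[of _ "inverse rho"]
    by (rule in_L2_scale[OF in_L2_diff[OF f eval_in_L2]])
  have Tg: "T_op mu k g = evH (Lambda_op mu evH rho f)"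
    unfolding g_def by (rule T_op_Lambda_residual[OF rho f])
  have "T_op mu k g y + rho * g y = f y" for y using rho by (simp add: Tg g_def)
  then have eq: "AE y in mu. T_op mu k g y + rho * g y = f y" by simp
  show R: "in_L2 mu (resolvent mu k rho f)" by (rule resolvent_eq_AE(1)[OF rho f g eq])
  have "AE y in mu. resolvent mu k rho f y = g y" by (rule resolvent_eq_AE(2)[OF rho f g eq])
  then have TR: "T_op mu k (resolvent mu k rho f) x = T_op mu k g x" for x
    using R g unfolding in_L2_def by (intro T_op_cong_AE) auto
  then show "T_op mu k (resolvent mu k rho f) = evH (Lambda_op mu evH rho f)" by (simp add: fun_eq_iff Tg)
  show "AE y in mu. T_op mu k (resolvent mu k rho f) y + rho * resolvent mu k rho f y = f y"
    using \<open>AE y in mu. resolvent mu k rho f y = g y\<close> eq by eventually_elim (simp add: TR)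
qed

end

section \<open>Orbit averaging\<close>

locale invariant_action = M: prob_space mu + G: prob_space lam
  for mu :: "'x::topological_space measure" and lam :: "'g::topological_space measure" +
  fixes act :: "'g \<Rightarrow> 'x \<Rightarrow> 'x"
  assumes sets_mu: "sets mu = sets borel" and sets_lam: "sets lam = sets borel"
    and act_measurable: "(\<lambda>p. act (fst p) (snd p)) \<in> borel_measurable (borel \<Otimes>\<^sub>M borel)"
    and mu_invariant: "invariant_measure act mu"
begin

sublocale PM: pair_prob_space mu lam
  by (simp add: pair_prob_space_def pair_sigma_finite_def M.prob_space_axioms G.prob_space_axioms
      prob_space_imp_sigma_finite)

lemma borel_measurable_mu_iff: "f \<in> borel_measurable mu \<longleftrightarrow> f \<in> borel_measurable borel"
  using measurable_cong_sets[OF sets_mu refl] by blast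

lemma act_measurable_pair: "(\<lambda>p. act (snd p) (fst p)) \<in> borel_measurable (mu \<Otimes>\<^sub>M lam)"
proof -
  have "(\<lambda>p. act (snd p) (fst p)) \<in> borel_measurable ((borel :: 'x measure) \<Otimes>\<^sub>M (borel :: 'g measure))"
    using measurable_pair_swap_iff[THEN iffD1, OF act_measurable] by (simp add: case_prod_beta')
  then show ?thesis using measurable_cong_sets[OF sets_pair_measure_cong[OF sets_mu sets_lam] refl] by blast
qed

lemma orbit_measurable_pair:
  "f \<in> borel_measurable borel \<Longrightarrow> (\<lambda>p. f (act (snd p) (fst p))) \<in> borel_measurable (mu \<Otimes>\<^sub>M lam)"
  using measurable_comp[OF act_measurable_pair] by (simp add: comp_def)

lemma act_measurable_point: "(\<lambda>g. act g x) \<in> borel_measurable lam"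
  using measurable_comp[OF measurable_Pair1'[of x mu lam] act_measurable_pair]
  by (simp add: comp_def sets_eq_imp_space_eq[OF sets_mu])

lemma act_measurable_group: "act g \<in> borel_measurable mu"
  using measurable_comp[OF measurable_Pair2'[of g lam mu] act_measurable_pair]
  by (simp add: comp_def sets_eq_imp_space_eq[OF sets_lam])

lemma distr_act: "distr mu borel (act g) = mu"
proof (rule measure_eqI)
  fix A assume "A \<in> sets (distr mu borel (act g))"
  then have A: "A \<in> sets borel" by simp
  have "emeasure (distr mu borel (act g)) A = emeasure mu (act g -` A)"
    using emeasure_distr[OF act_measurable_group A] by (simp add: sets_eq_imp_space_eq[OF sets_mu])
  also have "\<dots> = emeasure mu A" using mu_invariant A unfolding invariant_measure_def by blast
  finally show "emeasure (distr mu borel (act g)) A = emeasure mu A" .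
qed (simp add: sets_mu)

lemma nn_integral_orbit:
  assumes phi: "phi \<in> borel_measurable borel"
  shows "(\<integral>\<^sup>+x. (\<integral>\<^sup>+g. phi (act g x) \<partial>lam) \<partial>mu) = (\<integral>\<^sup>+x. phi x \<partial>mu)"
proof -
  have "(\<integral>\<^sup>+x. (\<integral>\<^sup>+g. phi (act g x) \<partial>lam) \<partial>mu) = (\<integral>\<^sup>+g. (\<integral>\<^sup>+x. phi (act g x) \<partial>mu) \<partial>lam)"
    using PM.Fubini[OF orbit_measurable_pair[OF phi]] by simp
  also have "\<dots> = (\<integral>\<^sup>+g. (\<integral>\<^sup>+x. phi x \<partial>distr mu borel (act g)) \<partial>lam)"
    using phi by (simp add: nn_integral_distr[OF act_measurable_group])
  also have "\<dots> = (\<integral>\<^sup>+g. (\<integral>\<^sup>+x. phi x \<partial>mu) \<partial>lam)" by (simp add: distr_act)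
  also have "\<dots> = (\<integral>\<^sup>+x. phi x \<partial>mu)" by (simp add: G.emeasure_space_1)
  finally show ?thesis .
qed

lemma nn_integral_orbit_measurable:
  assumes "phi \<in> borel_measurable borel"
  shows "(\<lambda>x. \<integral>\<^sup>+g. phi (act g x) \<partial>lam) \<in> borel_measurable mu"
  using G.borel_measurable_nn_integral[of "\<lambda>x g. phi (act g x)" mu] orbit_measurable_pair[OF assms]
  by (simp add: case_prod_beta')

lemma AE_orbit_square_integrable:
  assumes f: "in_L2 mu f"
  shows "AE x in mu. integrable lam (\<lambda>g. f (act g x)) \<and> integrable lam (\<lambda>g. (f (act g x))\<^sup>2)"
proof -
  have fm: "f \<in> borel_measurable borel" using f unfolding in_L2_def borel_measurable_mu_iff by blast
  have "(\<integral>\<^sup>+x. (\<integral>\<^sup>+g. ennreal ((f (act g x))\<^sup>2) \<partial>lam) \<partial>mu) = (\<integral>\<^sup>+x. ennreal ((f x)\<^sup>2) \<partial>mu)"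
    using fm by (intro nn_integral_orbit) simp
  also have "\<dots> < \<infinity>" using f unfolding in_L2_def integrable_iff_bounded by simp
  finally have "AE x in mu. (\<integral>\<^sup>+g. ennreal ((f (act g x))\<^sup>2) \<partial>lam) \<noteq> \<infinity>"
    using fm by (intro nn_integral_PInf_AE nn_integral_orbit_measurable) auto
  then show ?thesis
  proof eventually_elim
    case (elim x)
    have m: "(\<lambda>g. f (act g x)) \<in> borel_measurable lam"
      using measurable_comp[OF act_measurable_point fm] by (simp add: comp_def)
    with elim have "integrable lam (\<lambda>g. (f (act g x))\<^sup>2)"
      by (simp add: integrable_iff_bounded top.not_eq_extremum)
    with m show ?case using G.square_integrable_imp_integrable by blast
  qed
qed

lemma orbit_avg_measurable:
  assumes "f \<in> borel_measurable borel"
  shows "orbit_avg lam act f \<in> borel_measurable mu"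
  using G.borel_measurable_lebesgue_integral[of "\<lambda>x g. f (act g x)" mu] orbit_measurable_pair[OF assms]
  unfolding orbit_avg_def by (simp add: case_prod_beta')

lemma orbit_avg_square_le:
  assumes fm: "f \<in> borel_measurable borel"
  shows "ennreal ((orbit_avg lam act f x)\<^sup>2) \<le> (\<integral>\<^sup>+g. ennreal ((f (act g x))\<^sup>2) \<partial>lam)"
proof -
  have m: "(\<lambda>g. f (act g x)) \<in> borel_measurable lam"
    using measurable_comp[OF act_measurable_point fm] by (simp add: comp_def)
  show ?thesis
  proof (cases "integrable lam (\<lambda>g. (f (act g x))\<^sup>2)")
    case True
    then have "(orbit_avg lam act f x)\<^sup>2 \<le> (\<integral>g. (f (act g x))\<^sup>2 \<partial>lam)"
      unfolding orbit_avg_def using G.square_integrable_imp_integrable[OF m]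
      by (intro G.square_integral_le) auto
    also have "ennreal (\<integral>g. (f (act g x))\<^sup>2 \<partial>lam) = (\<integral>\<^sup>+g. ennreal ((f (act g x))\<^sup>2) \<partial>lam)"
      using True by (simp add: nn_integral_eq_integral)
    finally show ?thesis by (simp add: ennreal_leI)
  next
    case False
    with m have "(\<integral>\<^sup>+g. ennreal ((f (act g x))\<^sup>2) \<partial>lam) = \<infinity>"
      by (simp add: integrable_iff_bounded less_top[symmetric])
    then show ?thesis by simp
  qed
qed

lemma orbit_avg_in_L2:
  assumes f: "in_L2 mu f"
  shows "in_L2 mu (orbit_avg lam act f)"
proof -
  have fm: "f \<in> borel_measurable borel" using f unfolding in_L2_def borel_measurable_mu_iff by blast
  have "(\<integral>\<^sup>+x. ennreal ((orbit_avg lam act f x)\<^sup>2) \<partial>mu)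
      \<le> (\<integral>\<^sup>+x. (\<integral>\<^sup>+g. ennreal ((f (act g x))\<^sup>2) \<partial>lam) \<partial>mu)"
    by (intro nn_integral_mono orbit_avg_square_le[OF fm])
  also have "\<dots> = (\<integral>\<^sup>+x. ennreal ((f x)\<^sup>2) \<partial>mu)"
    using fm by (intro nn_integral_orbit) simp
  also have "\<dots> < \<infinity>" using f unfolding in_L2_def integrable_iff_bounded by simp
  finally show ?thesis
    using orbit_avg_measurable[OF fm] unfolding in_L2_def by (simp add: integrable_iff_bounded)
qed

lemma orbit_avg_cong_AE:
  assumes f: "f \<in> borel_measurable mu" and f': "f' \<in> borel_measurable mu"
    and eq: "AE y in mu. f y = f' y"
  shows "AE x in mu. orbit_avg lam act f x = orbit_avg lam act f' x"
proof -
  define N where "N = {y. f y \<noteq> f' y}"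
  have fb: "f \<in> borel_measurable borel" and fb': "f' \<in> borel_measurable borel"
    using f f' by (simp_all add: borel_measurable_mu_iff)
  then have N: "N \<in> sets borel" unfolding N_def by measurable
  then have ind: "indicator N \<in> (borel_measurable borel :: ('x \<Rightarrow> ennreal) set)" by simp
  have "emeasure mu N = 0"
    using eq N sets_mu AE_iff_measurable[of N mu "\<lambda>y. f y = f' y"]
    by (simp add: N_def sets_eq_imp_space_eq[OF sets_mu])
  then have "(\<integral>\<^sup>+x. (\<integral>\<^sup>+g. indicator N (act g x) \<partial>lam) \<partial>mu) = 0"
    using N sets_mu by (simp add: nn_integral_orbit[OF ind])
  then have "AE x in mu. (\<integral>\<^sup>+g. indicator N (act g x) \<partial>lam) = (0::ennreal)"
    by (simp add: nn_integral_0_iff_AE[OF nn_integral_orbit_measurable[OF ind]])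
  then show ?thesis
  proof eventually_elim
    case (elim x)
    have "(\<lambda>g. indicator N (act g x) :: ennreal) \<in> borel_measurable lam"
      using measurable_comp[OF act_measurable_point ind] by (simp add: comp_def)
    with elim have "AE g in lam. f (act g x) = f' (act g x)"
      by (simp add: nn_integral_0_iff_AE N_def indicator_eq_0_iff)
    moreover have "(\<lambda>g. f (act g x)) \<in> borel_measurable lam" "(\<lambda>g. f' (act g x)) \<in> borel_measurable lam"
      using measurable_comp[OF act_measurable_point fb] measurable_comp[OF act_measurable_point fb']
      by (simp_all add: comp_def)
    ultimately show ?case unfolding orbit_avg_def by (intro integral_cong_AE) auto
  qed
qed

lemma orbit_avg_add_scale:
  assumes "in_L2 mu a" "in_L2 mu b"
  shows "AE x in mu. orbit_avg lam act (\<lambda>y. a y + c * b y) x = orbit_avg lam act a x + c * orbit_avg lam act b x"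
  using AE_orbit_square_integrable[OF assms(1)] AE_orbit_square_integrable[OF assms(2)]
  by eventually_elim (simp add: orbit_avg_def)

end

section \<open>The commutators\<close>

locale kernel_commutator = rkhs_prob_space k evH mu + invariant_action mu lam act
  for k :: "'x::topological_space \<Rightarrow> 'x \<Rightarrow> real"
    and evH :: "'h::{real_inner,complete_space} \<Rightarrow> 'x \<Rightarrow> real"
    and mu :: "'x measure" and lam :: "'g::topological_space measure" and act :: "'g \<Rightarrow> 'x \<Rightarrow> 'x"
begin

lemma commutators_via_resolvent:
  assumes rho: "rho > 0" and f: "in_L2 mu f"
  obtains d where "in_L2 mu d"
    and "AE x in mu. comm_O_Lambda lam act mu evH rho f x = rho * d x"
    and "AE x in mu. comm_O_T lam act mu k (resolvent mu k rho f) x = T_op mu k d x + rho * d x"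
proof -
  define g where "g = resolvent mu k rho f"
  define Of where "Of = orbit_avg lam act f"
  define g' where "g' = resolvent mu k rho Of"
  define Og where "Og = orbit_avg lam act g"
  define d where "d x = g' x - Og x" for x
  have Of: "in_L2 mu Of" unfolding Of_def by (rule orbit_avg_in_L2[OF f])
  note res_f = resolvent_Lambda_op[OF rho f, folded g_def]
  note res_Of = resolvent_Lambda_op[OF rho Of, folded g'_def]
  have g: "in_L2 mu g" and g': "in_L2 mu g'" using res_f res_Of by blast+
  have Og: "in_L2 mu Og" unfolding Og_def by (rule orbit_avg_in_L2[OF g])
  have Tg: "in_L2 mu (T_op mu k g)" by (rule T_op_in_L2[OF g])
  have d: "in_L2 mu d" unfolding d_def by (rule in_L2_diff[OF g' Og])
  have "AE x in mu. Of x = orbit_avg lam act (\<lambda>y. T_op mu k g y + rho * g y) x"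
    unfolding Of_def using f in_L2_add_scale[OF Tg g] res_f(2)
    by (intro orbit_avg_cong_AE) (auto simp: in_L2_def)
  moreover have "AE x in mu. orbit_avg lam act (\<lambda>y. T_op mu k g y + rho * g y) x
      = orbit_avg lam act (T_op mu k g) x + rho * Og x"
    unfolding Og_def by (rule orbit_avg_add_scale[OF Tg g])
  ultimately have O_decomp: "AE x in mu. orbit_avg lam act (T_op mu k g) x = Of x - rho * Og x"
    by eventually_elim simp
  have comm_Lambda: "comm_O_Lambda lam act mu evH rho f x = orbit_avg lam act (T_op mu k g) x - T_op mu k g' x" for x
    unfolding comm_O_Lambda_def res_f(3) res_Of(3) Of_def ..
  have "AE x in mu. comm_O_Lambda lam act mu evH rho f x = rho * d x"
    using O_decomp res_Of(2) by eventually_elim (simp add: comm_Lambda d_def algebra_simps)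
  have comm_T: "comm_O_T lam act mu k g x = orbit_avg lam act (T_op mu k g) x - T_op mu k Og x" for x
    unfolding comm_O_T_def Og_def ..
  have Td: "T_op mu k d x = T_op mu k g' x - T_op mu k Og x" for x
    unfolding d_def by (rule T_op_diff[OF g' Og])
  have "AE x in mu. comm_O_T lam act mu k (resolvent mu k rho f) x = T_op mu k d x + rho * d x"
    using O_decomp res_Of(2) unfolding g_def[symmetric]
    by eventually_elim (simp add: comm_T Td d_def algebra_simps)
  with d \<open>AE x in mu. comm_O_Lambda lam act mu evH rho f x = rho * d x\<close> show thesis by (rule that)
qed

lemma comm_O_Lambda_zero_iff:
  assumes rho: "rho > 0" and f: "in_L2 mu f"
  shows "(AE x in mu. comm_O_Lambda lam act mu evH rho f x = 0) \<longleftrightarrow>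
         (AE x in mu. comm_O_T lam act mu k (resolvent mu k rho f) x = 0)"
proof -
  obtain d where d: "in_L2 mu d"
      "AE x in mu. comm_O_Lambda lam act mu evH rho f x = rho * d x"
      "AE x in mu. comm_O_T lam act mu k (resolvent mu k rho f) x = T_op mu k d x + rho * d x"
    by (rule commutators_via_resolvent[OF rho f])
  show ?thesis
  proof
    assume "AE x in mu. comm_O_Lambda lam act mu evH rho f x = 0"
    with d(2) have d0: "AE x in mu. d x = 0" by eventually_elim (use rho in simp)
    have "T_op mu k d x = T_op mu k (\<lambda>_. 0) x" for x
      using d(1) d0 unfolding in_L2_def by (intro T_op_cong_AE) auto
    then have Td0: "T_op mu k d x = 0" for x by (simp add: T_op_def)
    show "AE x in mu. comm_O_T lam act mu k (resolvent mu k rho f) x = 0"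
      using d(3) d0 by eventually_elim (simp add: Td0)
  next
    assume "AE x in mu. comm_O_T lam act mu k (resolvent mu k rho f) x = 0"
    with d(3) have "AE x in mu. T_op mu k d x + rho * d x = 0" by eventually_elim simp
    then have "AE x in mu. d x = 0" by (rule T_op_plus_injective[OF d(1) rho])
    with d(2) show "AE x in mu. comm_O_Lambda lam act mu evH rho f x = 0" by eventually_elim simp
  qed
qed

lemma comm_O_T_cong_AE:
  assumes g: "in_L2 mu g" and g': "in_L2 mu g'" and eq: "AE y in mu. g y = g' y"
  shows "comm_O_T lam act mu k g x = comm_O_T lam act mu k g' x"
proof -
  have "T_op mu k g = T_op mu k g'"
    using g g' eq unfolding in_L2_def by (auto intro!: T_op_cong_AE)
  moreover have "AE y in mu. orbit_avg lam act g y = orbit_avg lam act g' y"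
    using g g' eq unfolding in_L2_def by (intro orbit_avg_cong_AE) auto
  then have "T_op mu k (orbit_avg lam act g) = T_op mu k (orbit_avg lam act g')"
    using orbit_avg_in_L2[OF g] orbit_avg_in_L2[OF g'] unfolding in_L2_def by (auto intro!: T_op_cong_AE)
  ultimately show ?thesis unfolding comm_O_T_def by simp
qed

lemma comm_O_T_zero_if_comm_O_Lambda_zero:
  assumes rho: "rho > 0"
    and Lambda: "\<forall>f. in_L2 mu f \<longrightarrow> (AE x in mu. comm_O_Lambda lam act mu evH rho f x = 0)"
  shows "\<forall>f. in_L2 mu f \<longrightarrow> (AE x in mu. comm_O_T lam act mu k f x = 0)"
proof (intro allI impI)
  fix g assume g: "in_L2 mu g"
  define f where "f = (\<lambda>y. T_op mu k g y + rho * g y)"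
  have f: "in_L2 mu f" unfolding f_def by (rule in_L2_add_scale[OF T_op_in_L2[OF g] g])
  have eq: "AE y in mu. T_op mu k g y + rho * g y = f y" by (simp add: f_def)
  have "AE x in mu. comm_O_T lam act mu k (resolvent mu k rho f) x = 0"
    using comm_O_Lambda_zero_iff[OF rho f] Lambda f by blast
  moreover have "comm_O_T lam act mu k (resolvent mu k rho f) x = comm_O_T lam act mu k g x" for x
    by (rule comm_O_T_cong_AE[OF resolvent_eq_AE(1)[OF rho f g eq] g resolvent_eq_AE(2)[OF rho f g eq]])
  ultimately show "AE x in mu. comm_O_T lam act mu k g x = 0" by simp
qed

lemma comm_O_Lambda_zero_if_comm_O_T_zero:
  assumes "\<forall>f. in_L2 mu f \<longrightarrow> (AE x in mu. comm_O_T lam act mu k f x = 0)"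
  shows "\<forall>rho > 0. \<forall>f. in_L2 mu f \<longrightarrow> (AE x in mu. comm_O_Lambda lam act mu evH rho f x = 0)"
  using assms comm_O_Lambda_zero_iff resolvent_Lambda_op(1) by blast

end

theorem lemma5p6:
  fixes lam :: "'g::{topological_group_add, second_countable_topology, t2_space} measure"
    and act :: "'g \<Rightarrow> 'x::polish_space \<Rightarrow> 'x"
    and mu :: "'x measure"
    and k :: "'x \<Rightarrow> 'x \<Rightarrow> real"
    and evH :: "'h::{real_inner, complete_space} \<Rightarrow> 'x \<Rightarrow> real"
  assumes G_compact: "compact (UNIV :: 'g set)"
    and haar: "haar_prob lam"
    and action: "group_action act"
    and act_meas: "(\<lambda>p. act (fst p) (snd p)) \<in> borel_measurable (borel \<Otimes>\<^sub>M borel)"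
    and mu_sets: "sets mu = sets borel"
    and mu_prob: "prob_space mu"
    and mu_inv: "invariant_measure act mu"
    and mu_supp: "full_support mu"
    and k_meas: "(\<lambda>p. k (fst p) (snd p)) \<in> borel_measurable (borel \<Otimes>\<^sub>M borel)"
    and k_sym: "\<And>x y. k x y = k y x"
    and k_pd: "pos_def_kernel k"
    and k_cont: "\<And>x. continuous_on UNIV (\<lambda>y. k y x)"
    and k_bdd: "bdd_above (range (\<lambda>x. k x x))"
    and H: "is_rkhs k evH"
  shows "(\<forall>rho > 0. \<forall>f. in_L2 mu f \<longrightarrow>
            ((AE x in mu. comm_O_Lambda lam act mu evH rho f x = 0) \<longleftrightarrow>
             (AE x in mu. comm_O_T lam act mu k (resolvent mu k rho f) x = 0)))
       \<and> ((\<exists>rho > 0. \<forall>f. in_L2 mu f \<longrightarrow> (AE x in mu. comm_O_Lambda lam act mu evH rho f x = 0)) \<longleftrightarrow>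
          (\<forall>rho > 0. \<forall>f. in_L2 mu f \<longrightarrow> (AE x in mu. comm_O_Lambda lam act mu evH rho f x = 0)))
       \<and> ((\<forall>rho > 0. \<forall>f. in_L2 mu f \<longrightarrow> (AE x in mu. comm_O_Lambda lam act mu evH rho f x = 0)) \<longleftrightarrow>
          (\<forall>f. in_L2 mu f \<longrightarrow> (AE x in mu. comm_O_T lam act mu k f x = 0)))"
proof -
  have lam_sets: "sets lam = sets borel" and lam_prob: "prob_space lam"
    using haar unfolding haar_prob_def by blast+
  interpret kernel_commutator k evH mu lam act
    by (intro kernel_commutator.intro rkhs_prob_space.intro rkhs.intro invariant_action.intro
        rkhs_prob_space_axioms.intro invariant_action_axioms.intro
        H k_cont k_bdd mu_prob mu_sets lam_prob lam_sets act_meas mu_inv)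
  show ?thesis
    using comm_O_Lambda_zero_iff comm_O_T_zero_if_comm_O_Lambda_zero comm_O_Lambda_zero_if_comm_O_T_zero
    by (meson zero_less_one)
qed

end
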